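(* Let $\mathbb{H}$ be a finite set and $\mathcal{H}=(H_e)_{e\in E(\mathbb{Z}^d)}$ a collection of subsets of $\mathbb{H}^2$. Let $S\subset\mathbb{Z}^d$ be finite and even, let $\{\mathbb{H}_u\}_{u\in\partial_\bullet S}$ be subsets of $\mathbb{H}$, and let $\mathcal{F}\subset\mathrm{Hom}_{S,\mathcal{H}}$ be such that $F(u)\in\mathbb{H}_u$ for every $F\in\mathcal{F}$ and $u\in\partial_\bullet S$. Let $F$ be a uniformly random element of $\mathcal{F}$, and for each odd $v\in S$ let $X_v$ be a random variable measurable with respect to $F|_{N(v)}$. Then \[ |\mathcal{F}|\le\prod_{v\in S\text{ odd}}\ \prod_x\left(\frac{Z^{\mathcal{H}}_v(\Psi_{v,x},I_{v,x})}{\mathbb{P}(X_v=x)}\right)^{\mathbb{P}(X_v=x)/2d}\cdot\prod_{u\in\partial_\bullet S}|\mathbb{H}_u|^{\frac1{2d}|\partial u\cap\partial S|}, \] where the inner product is over $x$ in the support of $X_v$, and $\Psi_{v,x}$, $I_{v,x}$ are the supports of $F|_{N(v)}$ and $F(v)$ on the event $\{X_v=x\}$.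
   Context: $\mathbb{Z}^d$ with nearest-neighbour edges $E(\mathbb{Z}^d)$; even/odd vertices by parity of coordinate sum; $N(v)$ the neighbours of $v$; $\partial_\bullet S$ the vertices of $S$ with a neighbour outside $S$; $S$ is even if $\partial_\bullet S$ consists only of even vertices; $\partial u$ the edges incident to $u$; $\partial S$ the edges with exactly one endpoint in $S$. $\mathrm{Hom}_{S,\mathcal{H}}$ is the set of $F:S\to\mathbb{H}$ with $(F(v),F(u))\in H_{\{v,u\}}$ whenever $v\in S$ is odd and $u\sim v$. For an edge $e$ and $h\in\mathbb{H}$, $H_{e,h}=\{h'\in\mathbb{H}:(h',h)\in H_e\}$; for odd $v$ and $\psi:N(v)\to\mathbb{H}$, $H_{v,\psi}=\bigcap_{u\sim v}H_{\{v,u\},\psi(u)}$; for a set $\Psi$ of such $\psi$ and $I\subset\mathbb{H}$, $Z^{\mathcal{H}}_v(\Psi,I)=\sum_{\psi\in\Psi}|H_{v,\psi}\cap I|^{2d}$. *)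

theory Defs
  imports "HOL-Analysis.Analysis"
begin

text \<open>Vertices of Z^d are elements of int ^ 'n, with d = CARD('n).\<close>

definition adj :: "int ^ 'n \<Rightarrow> int ^ 'n \<Rightarrow> bool" where
  "adj u v \<longleftrightarrow> (\<Sum>i\<in>UNIV. \<bar>u $ i - v $ i\<bar>) = 1"

definition nbrs :: "int ^ 'n \<Rightarrow> (int ^ 'n) set" where
  "nbrs v = {u. adj v u}"

definition even_vtx :: "int ^ 'n \<Rightarrow> bool" where
  "even_vtx v \<longleftrightarrow> even (\<Sum>i\<in>UNIV. v $ i)"

definition odd_vtx :: "int ^ 'n \<Rightarrow> bool" where
  "odd_vtx v \<longleftrightarrow> odd (\<Sum>i\<in>UNIV. v $ i)"

definition inner_bd :: "(int ^ 'n) set \<Rightarrow> (int ^ 'n) set" where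
  "inner_bd S = {v \<in> S. \<exists>u. adj v u \<and> u \<notin> S}"

definition even_set :: "(int ^ 'n) set \<Rightarrow> bool" where
  "even_set S \<longleftrightarrow> (\<forall>v \<in> inner_bd S. even_vtx v)"

definition edge_bd :: "(int ^ 'n) set \<Rightarrow> (int ^ 'n) set set" where
  "edge_bd S = {{u, w} | u w. adj u w \<and> u \<in> S \<and> w \<notin> S}"

definition inc_edges :: "int ^ 'n \<Rightarrow> (int ^ 'n) set set" where
  "inc_edges u = {{u, w} | w. adj u w}"

definition Hom :: "'h set \<Rightarrow> ((int ^ 'n) set \<Rightarrow> ('h \<times> 'h) set) \<Rightarrow> (int ^ 'n) set
    \<Rightarrow> (int ^ 'n \<Rightarrow> 'h) set" where
  "Hom Hs H S = {F \<in> S \<rightarrow>\<^sub>E Hs. \<forall>v \<in> S. odd_vtx v \<longrightarrow>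
      (\<forall>u. adj v u \<longrightarrow> (F v, F u) \<in> H {v, u})}"

definition H_edge :: "'h set \<Rightarrow> ((int ^ 'n) set \<Rightarrow> ('h \<times> 'h) set) \<Rightarrow> (int ^ 'n) set \<Rightarrow> 'h \<Rightarrow> 'h set" where
  "H_edge Hs H e h = {h' \<in> Hs. (h', h) \<in> H e}"

definition H_vtx :: "'h set \<Rightarrow> ((int ^ 'n) set \<Rightarrow> ('h \<times> 'h) set) \<Rightarrow> int ^ 'n \<Rightarrow> (int ^ 'n \<Rightarrow> 'h) \<Rightarrow> 'h set" where
  "H_vtx Hs H v \<psi> = (\<Inter>u \<in> nbrs v. H_edge Hs H {v, u} (\<psi> u))"

definition Zv :: "'h set \<Rightarrow> ((int ^ 'n) set \<Rightarrow> ('h \<times> 'h) set) \<Rightarrow> int ^ 'n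
    \<Rightarrow> (int ^ 'n \<Rightarrow> 'h) set \<Rightarrow> 'h set \<Rightarrow> nat" where
  "Zv Hs H v \<Psi> I = (\<Sum>\<psi> \<in> \<Psi>. card (H_vtx Hs H v \<psi> \<inter> I) ^ (2 * CARD('n)))"

text \<open>X v \<psi> is the value of X_v as a function of the restriction \<psi> = F|_{N(v)}.
  Probabilities are w.r.t. the uniform measure on the finite set FF.\<close>
definition probX :: "(int ^ 'n \<Rightarrow> 'h) set \<Rightarrow> (int ^ 'n \<Rightarrow> (int ^ 'n \<Rightarrow> 'h) \<Rightarrow> 'x)
    \<Rightarrow> int ^ 'n \<Rightarrow> 'x \<Rightarrow> real" where
  "probX FF X v x = real (card {F \<in> FF. X v (restrict F (nbrs v)) = x}) / real (card FF)"

definition PsiX :: "(int ^ 'n \<Rightarrow> 'h) set \<Rightarrow> (int ^ 'n \<Rightarrow> (int ^ 'n \<Rightarrow> 'h) \<Rightarrow> 'x)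
    \<Rightarrow> int ^ 'n \<Rightarrow> 'x \<Rightarrow> (int ^ 'n \<Rightarrow> 'h) set" where
  "PsiX FF X v x = {restrict F (nbrs v) | F. F \<in> FF \<and> X v (restrict F (nbrs v)) = x}"

definition IX :: "(int ^ 'n \<Rightarrow> 'h) set \<Rightarrow> (int ^ 'n \<Rightarrow> (int ^ 'n \<Rightarrow> 'h) \<Rightarrow> 'x)
    \<Rightarrow> int ^ 'n \<Rightarrow> 'x \<Rightarrow> 'h set" where
  "IX FF X v x = {F v | F. F \<in> FF \<and> X v (restrict F (nbrs v)) = x}"

end

theory Submission
  imports Defs
begin

text \<open>Let F be uniform on \<F> and write H(A) for the entropy of F restricted to A, so that
  H(S) = ln |\<F>| and H is submodular. Let E be the even vertices of S; the neighbourhoods of the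
  odd vertices v of S lie in E, so submodularity gives H(S) \<le> H(E) + \<Sum>_v (H({v} \<union> N(v)) - H(N(v))).
  Every u \<in> E lies in exactly 2d of the sets N(v) and {u} (the latter counted |\<partial>u \<inter> \<partial>S| times),
  so Shearer's argument gives 2d H(E) \<le> \<Sum>_v H(N(v)) + \<Sum>_u |\<partial>u \<inter> \<partial>S| H({u}), and
  H({u}) \<le> ln |\<H>_u|. At an odd vertex v, given \<psi> = F|N(v) the value F(v) lies in a set of size
  k(\<psi>) = |H_{v,\<psi>} \<inter> I_{v,X_v}|; this and Gibbs' inequality for the kernel k(\<psi>)^{2d} / Z_v(\<Psi>_{v,x}, I_{v,x})
  bound H(N(v)) + 2d (H({v} \<union> N(v)) - H(N(v))) by \<Sum>_x P(X_v = x) ln (Z_v / P(X_v = x)).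
  Exponentiating the resulting bound on 2d ln |\<F>| gives the theorem.\<close>

section \<open>Entropy under the uniform distribution\<close>

text \<open>The Shannon entropy, in nats, of f(W) for W uniformly distributed on \<Omega>.\<close>
definition uniform_entropy :: "'a set \<Rightarrow> ('a \<Rightarrow> 'b) \<Rightarrow> real" where
  "uniform_entropy \<Omega> f =
     (\<Sum>w\<in>\<Omega>. ln (real (card \<Omega>) / real (card {w'\<in>\<Omega>. f w' = f w}))) / real (card \<Omega>)"

lemma card_fibre_pos: "finite \<Omega> \<Longrightarrow> w \<in> \<Omega> \<Longrightarrow> card {w'\<in>\<Omega>. f w' = f w} > 0"
  by (auto simp: card_gt_0_iff)

lemma sum_card_fibres:
  assumes "finite \<Omega>"
  shows "(\<Sum>y\<in>f ` \<Omega>. real (card {w\<in>\<Omega>. f w = y})) = real (card \<Omega>)"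
  using sum.image_gen[OF assms, of "\<lambda>_. 1 :: real" f] by simp

lemma sum_divide_card_fibre:
  assumes "finite \<Omega>"
  shows "(\<Sum>w\<in>\<Omega>. g (f w) / real (card {w'\<in>\<Omega>. f w' = f w})) = (\<Sum>y\<in>f ` \<Omega>. g y)"
proof -
  have fibre_sum: "(\<Sum>w\<in>{w\<in>\<Omega>. f w = y}. g (f w) / real (card {w'\<in>\<Omega>. f w' = f w})) = g y"
    if "y \<in> f ` \<Omega>" for y
  proof -
    have "card {w\<in>\<Omega>. f w = y} > 0" using that assms by (auto simp: card_gt_0_iff)
    moreover have "(\<Sum>w\<in>{w\<in>\<Omega>. f w = y}. g (f w) / real (card {w'\<in>\<Omega>. f w' = f w}))
        = (\<Sum>w\<in>{w\<in>\<Omega>. f w = y}. g y / real (card {w\<in>\<Omega>. f w = y}))"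
      by (rule sum.cong) auto
    ultimately show ?thesis by simp
  qed
  show ?thesis
    by (subst sum.image_gen[OF assms, where g = f]) (rule sum.cong[OF refl fibre_sum])
qed

lemma sum_ln_nonpos:
  assumes "finite A" "\<And>x. x \<in> A \<Longrightarrow> r x > 0" "(\<Sum>x\<in>A. r x) \<le> real (card A)"
  shows "(\<Sum>x\<in>A. ln (r x)) \<le> 0"
proof -
  have "(\<Sum>x\<in>A. ln (r x)) \<le> (\<Sum>x\<in>A. r x - 1)"
    by (rule sum_mono) (simp add: assms(2) ln_le_minus_one)
  with assms(3) show ?thesis by (simp add: sum_subtractf)
qed

text \<open>Gibbs' inequality for conditional distributions: the conditional entropy of \<open>t\<close> given
  \<open>\<phi> \<circ> t\<close> is at most the cross entropy against any sub-stochastic kernel \<open>q\<close> from the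
  values of \<open>\<phi>\<close> to those of \<open>t\<close>.\<close>
lemma uniform_entropy_conditional_le:
  assumes fin: "finite \<Omega>"
    and q_pos: "\<And>w. w \<in> \<Omega> \<Longrightarrow> q (t w) > 0"
    and q_sum: "\<And>y. (\<Sum>\<tau>\<in>{\<tau>\<in>t ` \<Omega>. \<phi> \<tau> = y}. q \<tau>) \<le> 1"
  shows "uniform_entropy \<Omega> t \<le>
    uniform_entropy \<Omega> (\<lambda>w. \<phi> (t w)) - (\<Sum>w\<in>\<Omega>. ln (q (t w))) / real (card \<Omega>)"
proof (cases "\<Omega> = {}")
  case True
  then show ?thesis by (simp add: uniform_entropy_def)
next
  case False
  define N where "N = real (card \<Omega>)"
  define ct where "ct w = real (card {w'\<in>\<Omega>. t w' = t w})" for w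
  define C where "C y = real (card {w\<in>\<Omega>. \<phi> (t w) = y})" for y
  have N_pos: "N > 0" using fin False by (simp add: N_def card_gt_0_iff)
  have ct_pos: "ct w > 0" and C_pos: "C (\<phi> (t w)) > 0" if "w \<in> \<Omega>" for w
    using card_fibre_pos[OF fin that] by (auto simp: ct_def C_def)
  have "(\<Sum>w\<in>\<Omega>. q (t w) * C (\<phi> (t w)) / ct w) = (\<Sum>\<tau>\<in>t ` \<Omega>. q \<tau> * C (\<phi> \<tau>))"
    unfolding ct_def by (rule sum_divide_card_fibre[OF fin])
  also have "\<dots> = (\<Sum>y\<in>\<phi> ` t ` \<Omega>. C y * (\<Sum>\<tau>\<in>{\<tau>\<in>t ` \<Omega>. \<phi> \<tau> = y}. q \<tau>))"
    by (subst sum.image_gen[where g = \<phi>]) (auto simp: fin sum_distrib_left mult.commute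
        intro!: sum.cong)
  also have "\<dots> \<le> (\<Sum>y\<in>\<phi> ` t ` \<Omega>. C y)"
    by (rule sum_mono) (simp add: C_def mult_left_le q_sum)
  also have "\<dots> = N"
    using sum_card_fibres[OF fin, of "\<lambda>w. \<phi> (t w)"] by (simp add: C_def N_def image_image)
  finally have "(\<Sum>w\<in>\<Omega>. ln (q (t w) * C (\<phi> (t w)) / ct w)) \<le> 0"
    using fin q_pos ct_pos C_pos by (intro sum_ln_nonpos) (auto simp: N_def)
  moreover have "ln (q (t w) * C (\<phi> (t w)) / ct w)
      = ln (q (t w)) + ln (N / ct w) - ln (N / C (\<phi> (t w)))" if "w \<in> \<Omega>" for w
    using q_pos[OF that] ct_pos[OF that] C_pos[OF that] N_pos by (simp add: ln_mult ln_div)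
  ultimately have "(\<Sum>w\<in>\<Omega>. ln (q (t w))) + N * uniform_entropy \<Omega> t
      - N * uniform_entropy \<Omega> (\<lambda>w. \<phi> (t w)) \<le> 0"
    using N_pos by (simp add: uniform_entropy_def N_def ct_def C_def sum.distrib sum_subtractf)
  then show ?thesis using N_pos by (simp add: N_def[symmetric] field_simps)
qed

lemma uniform_entropy_altdef:
  assumes "finite \<Omega>"
  shows "uniform_entropy \<Omega> f =
    ln (real (card \<Omega>)) - (\<Sum>w\<in>\<Omega>. ln (real (card {w'\<in>\<Omega>. f w' = f w}))) / real (card \<Omega>)"
proof (cases "\<Omega> = {}")
  case False
  then have "card \<Omega> > 0" using assms by (simp add: card_gt_0_iff)
  moreover have "ln (real (card \<Omega>) / real (card {w'\<in>\<Omega>. f w' = f w}))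
      = ln (real (card \<Omega>)) - ln (real (card {w'\<in>\<Omega>. f w' = f w}))" if "w \<in> \<Omega>" for w
    using card_fibre_pos[OF assms that, of f] \<open>card \<Omega> > 0\<close> by (simp add: ln_div)
  ultimately show ?thesis
    by (simp add: uniform_entropy_def sum_subtractf diff_divide_distrib)
qed (simp add: uniform_entropy_def)

lemma uniform_entropy_cong_fibres:
  assumes "\<And>w w'. w \<in> \<Omega> \<Longrightarrow> w' \<in> \<Omega> \<Longrightarrow> f w = f w' \<longleftrightarrow> g w = g w'"
  shows "uniform_entropy \<Omega> f = uniform_entropy \<Omega> g"
proof -
  have "{w'\<in>\<Omega>. f w' = f w} = {w'\<in>\<Omega>. g w' = g w}" if "w \<in> \<Omega>" for w
    using assms that by blast
  then show ?thesis unfolding uniform_entropy_def by (simp cong: sum.cong)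
qed

lemma uniform_entropy_inj:
  assumes "inj_on f \<Omega>"
  shows "uniform_entropy \<Omega> f = ln (real (card \<Omega>))"
proof -
  have "{w'\<in>\<Omega>. f w' = f w} = {w}" if "w \<in> \<Omega>" for w
    using assms that by (auto dest: inj_onD)
  then show ?thesis unfolding uniform_entropy_def by (simp cong: sum.cong)
qed

lemma uniform_entropy_const: "uniform_entropy \<Omega> (\<lambda>_. c) = 0"
  by (simp add: uniform_entropy_def)

lemma uniform_entropy_le_ln_card:
  assumes "finite \<Omega>" "\<Omega> \<noteq> {}" "finite B" "f ` \<Omega> \<subseteq> B"
  shows "uniform_entropy \<Omega> f \<le> ln (real (card B))"
proof -
  have B_pos: "real (card B) > 0"
    using assms by (auto simp: card_gt_0_iff)
  have "uniform_entropy \<Omega> f \<le> uniform_entropy \<Omega> (\<lambda>w. (\<lambda>_. ()) (f w))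
      - (\<Sum>w\<in>\<Omega>. ln (1 / real (card B))) / real (card \<Omega>)"
  proof (rule uniform_entropy_conditional_le[OF assms(1)])
    have "card (f ` \<Omega>) \<le> card B" by (rule card_mono[OF assms(3,4)])
    then show "(\<Sum>\<tau>\<in>{\<tau>\<in>f ` \<Omega>. () = y}. 1 / real (card B)) \<le> 1" for y :: unit
      using B_pos by simp
  qed (use B_pos in simp)
  also have "\<dots> = ln (real (card B))"
    using assms(1,2) B_pos by (simp add: uniform_entropy_const ln_div)
  finally show ?thesis .
qed

lemma uniform_entropy_pair_le:
  assumes fin: "finite \<Omega>"
    and K: "\<And>w. w \<in> \<Omega> \<Longrightarrow> finite (K (f w)) \<and> g w \<in> K (f w)"
  shows "uniform_entropy \<Omega> (\<lambda>w. (f w, g w)) \<le>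
    uniform_entropy \<Omega> f + (\<Sum>w\<in>\<Omega>. ln (real (card (K (f w))))) / real (card \<Omega>)"
proof -
  have K_pos: "real (card (K (f w))) > 0" if "w \<in> \<Omega>" for w
    using K[OF that] by (auto simp: card_gt_0_iff)
  have "uniform_entropy \<Omega> (\<lambda>w. (f w, g w)) \<le> uniform_entropy \<Omega> (\<lambda>w. fst (f w, g w))
      - (\<Sum>w\<in>\<Omega>. ln (1 / real (card (K (fst (f w, g w)))))) / real (card \<Omega>)"
  proof (rule uniform_entropy_conditional_le[OF fin])
    show "(\<Sum>\<tau>\<in>{\<tau>\<in>(\<lambda>w. (f w, g w)) ` \<Omega>. fst \<tau> = y}. 1 / real (card (K (fst \<tau>)))) \<le> 1"
      for y
    proof (cases "y \<in> f ` \<Omega>")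
      case True
      then obtain w where w: "w \<in> \<Omega>" "y = f w" by blast
      have "{\<tau>\<in>(\<lambda>w. (f w, g w)) ` \<Omega>. fst \<tau> = y} \<subseteq> {y} \<times> K y"
        using K by auto
      then have "card {\<tau>\<in>(\<lambda>w. (f w, g w)) ` \<Omega>. fst \<tau> = y} \<le> card (K y)"
        using card_mono[of "{y} \<times> K y"] K[OF w(1)] w(2) by (simp add: card_cartesian_product)
      then show ?thesis using K_pos[OF w(1)] w(2) by simp
    next
      case False
      then have no_fibre: "{\<tau>\<in>(\<lambda>w. (f w, g w)) ` \<Omega>. fst \<tau> = y} = {}" by auto
      show ?thesis unfolding no_fibre by simp
    qed
  qed (use K_pos in simp)
  also have "\<dots> = uniform_entropy \<Omega> f + (\<Sum>w\<in>\<Omega>. ln (real (card (K (f w))))) / real (card \<Omega>)"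
    using K_pos by (simp add: ln_div sum_negf cong: sum.cong)
  finally show ?thesis .
qed

lemma sum_card_fibres_closed:
  assumes "finite T" "T \<subseteq> \<Omega>" "\<And>w w'. w \<in> \<Omega> \<Longrightarrow> w' \<in> T \<Longrightarrow> f w = f w' \<Longrightarrow> w \<in> T"
  shows "(\<Sum>y\<in>f ` T. real (card {w\<in>\<Omega>. f w = y})) = real (card T)"
proof -
  have "{w\<in>\<Omega>. f w = y} = {w\<in>T. f w = y}" if "y \<in> f ` T" for y
    using assms(2,3) that by blast
  then have "(\<Sum>y\<in>f ` T. real (card {w\<in>\<Omega>. f w = y})) = (\<Sum>y\<in>f ` T. real (card {w\<in>T. f w = y}))"
    by (simp cong: sum.cong)
  also have "\<dots> = real (card T)" by (rule sum_card_fibres[OF assms(1)])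
  finally show ?thesis .
qed

lemma sum_fibre_pairs_le_square:
  assumes fin: "finite \<Omega>"
    and cf: "\<And>w. w \<in> \<Omega> \<Longrightarrow> c w = cf (f w)" and cg: "\<And>w. w \<in> \<Omega> \<Longrightarrow> c w = cg (g w)"
  shows "(\<Sum>\<tau>\<in>{\<tau>\<in>(\<lambda>w. (f w, g w)) ` \<Omega>. cf (fst \<tau>) = y}.
      real (card {w\<in>\<Omega>. f w = fst \<tau>}) * real (card {w\<in>\<Omega>. g w = snd \<tau>}))
    \<le> real (card {w\<in>\<Omega>. c w = y}) ^ 2"
proof -
  define T where "T = {w\<in>\<Omega>. c w = y}"
  have fin_T: "finite T" using fin by (simp add: T_def)
  have sub: "{\<tau>\<in>(\<lambda>w. (f w, g w)) ` \<Omega>. cf (fst \<tau>) = y} \<subseteq> f ` T \<times> g ` T"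
    using cf by (auto simp: T_def)
  have "(\<Sum>\<tau>\<in>{\<tau>\<in>(\<lambda>w. (f w, g w)) ` \<Omega>. cf (fst \<tau>) = y}.
      real (card {w\<in>\<Omega>. f w = fst \<tau>}) * real (card {w\<in>\<Omega>. g w = snd \<tau>}))
    \<le> (\<Sum>\<tau>\<in>f ` T \<times> g ` T. real (card {w\<in>\<Omega>. f w = fst \<tau>}) * real (card {w\<in>\<Omega>. g w = snd \<tau>}))"
    by (rule sum_mono2[OF _ sub]) (auto simp: fin_T)
  also have "\<dots> = (\<Sum>a\<in>f ` T. real (card {w\<in>\<Omega>. f w = a})) * (\<Sum>b\<in>g ` T. real (card {w\<in>\<Omega>. g w = b}))"
    by (simp add: sum_product sum.cartesian_product case_prod_beta')
  also have "(\<Sum>a\<in>f ` T. real (card {w\<in>\<Omega>. f w = a})) = real (card T)"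
    by (rule sum_card_fibres_closed[OF fin_T]) (auto simp: T_def, metis cf)
  also have "(\<Sum>b\<in>g ` T. real (card {w\<in>\<Omega>. g w = b})) = real (card T)"
    by (rule sum_card_fibres_closed[OF fin_T]) (auto simp: T_def, metis cg)
  finally show ?thesis by (simp add: T_def power2_eq_square)
qed

text \<open>Gibbs' inequality with the kernel P(f = a) P(g = b) / P(c = cf a)^2.\<close>
lemma uniform_entropy_submodular:
  assumes fin: "finite \<Omega>"
    and cf: "\<And>w. w \<in> \<Omega> \<Longrightarrow> c w = cf (f w)" and cg: "\<And>w. w \<in> \<Omega> \<Longrightarrow> c w = cg (g w)"
  shows "uniform_entropy \<Omega> (\<lambda>w. (f w, g w)) + uniform_entropy \<Omega> c
    \<le> uniform_entropy \<Omega> f + uniform_entropy \<Omega> g"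
proof -
  define N where "N = real (card \<Omega>)"
  define cF where "cF a = real (card {w\<in>\<Omega>. f w = a})" for a
  define cG where "cG b = real (card {w\<in>\<Omega>. g w = b})" for b
  define cC where "cC z = real (card {w\<in>\<Omega>. c w = z})" for z
  define q where "q \<tau> = cF (fst \<tau>) * cG (snd \<tau>) / cC (cf (fst \<tau>)) ^ 2" for \<tau>
  have pos: "cF (f w) > 0" "cG (g w) > 0" "cC (c w) > 0" if "w \<in> \<Omega>" for w
    using card_fibre_pos[OF fin that] by (auto simp: cF_def cG_def cC_def)
  have "uniform_entropy \<Omega> (\<lambda>w. (f w, g w)) \<le> uniform_entropy \<Omega> (\<lambda>w. cf (fst (f w, g w)))
      - (\<Sum>w\<in>\<Omega>. ln (q (f w, g w))) / N"
    unfolding N_def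
  proof (rule uniform_entropy_conditional_le[OF fin])
    show "q (f w, g w) > 0" if "w \<in> \<Omega>" for w
      using pos[OF that] cf[OF that] by (simp add: q_def)
    have "(\<Sum>\<tau>\<in>{\<tau>\<in>(\<lambda>w. (f w, g w)) ` \<Omega>. cf (fst \<tau>) = y}. q \<tau>)
        = (\<Sum>\<tau>\<in>{\<tau>\<in>(\<lambda>w. (f w, g w)) ` \<Omega>. cf (fst \<tau>) = y}. cF (fst \<tau>) * cG (snd \<tau>)) / cC y ^ 2" for y
      by (simp add: q_def sum_divide_distrib)
    then show "(\<Sum>\<tau>\<in>{\<tau>\<in>(\<lambda>w. (f w, g w)) ` \<Omega>. cf (fst \<tau>) = y}. q \<tau>) \<le> 1" for y
      using sum_fibre_pairs_le_square[where c = c and cf = cf and f = f and cg = cg and g = g,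
          OF fin cf cg, of y]
      by (auto simp: cF_def cG_def cC_def divide_le_eq_1)
  qed
  also have "uniform_entropy \<Omega> (\<lambda>w. cf (fst (f w, g w))) = uniform_entropy \<Omega> c"
    by (rule uniform_entropy_cong_fibres) (simp add: cf)
  also have "(\<Sum>w\<in>\<Omega>. ln (q (f w, g w))) / N
      = (\<Sum>w\<in>\<Omega>. ln (cF (f w))) / N + (\<Sum>w\<in>\<Omega>. ln (cG (g w))) / N - 2 * ((\<Sum>w\<in>\<Omega>. ln (cC (c w))) / N)"
  proof -
    have "ln (q (f w, g w)) = ln (cF (f w)) + ln (cG (g w)) - 2 * ln (cC (c w))" if "w \<in> \<Omega>" for w
      using pos[OF that] cf[OF that] by (simp add: q_def ln_mult ln_div ln_realpow)
    then show ?thesis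
      by (simp add: sum.distrib sum_subtractf sum_distrib_left add_divide_distrib
          diff_divide_distrib cong: sum.cong)
  qed
  finally show ?thesis
    using uniform_entropy_altdef[OF fin, of f] uniform_entropy_altdef[OF fin, of g]
      uniform_entropy_altdef[OF fin, of c]
    by (simp add: N_def cF_def cG_def cC_def)
qed

abbreviation restr_entropy :: "('v \<Rightarrow> 'h) set \<Rightarrow> 'v set \<Rightarrow> real" where
  "restr_entropy \<Omega> A \<equiv> uniform_entropy \<Omega> (\<lambda>F. restrict F A)"

lemma restr_entropy_submodular:
  assumes "finite \<Omega>"
  shows "restr_entropy \<Omega> (A \<union> B) + restr_entropy \<Omega> (A \<inter> B) \<le> restr_entropy \<Omega> A + restr_entropy \<Omega> B"
proof -
  have "restr_entropy \<Omega> (A \<union> B) = uniform_entropy \<Omega> (\<lambda>F. (restrict F A, restrict F B))"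
    by (rule uniform_entropy_cong_fibres) (auto simp: restrict_def fun_eq_iff)
  moreover have "uniform_entropy \<Omega> (\<lambda>F. (restrict F A, restrict F B)) + restr_entropy \<Omega> (A \<inter> B)
      \<le> restr_entropy \<Omega> A + restr_entropy \<Omega> B"
    by (rule uniform_entropy_submodular[OF assms, where cf = "\<lambda>\<alpha>. restrict \<alpha> (A \<inter> B)"
          and cg = "\<lambda>\<alpha>. restrict \<alpha> (A \<inter> B)"]) (auto simp: restrict_def fun_eq_iff)
  ultimately show ?thesis by simp
qed

lemma restr_entropy_singleton_le:
  assumes "finite \<Omega>" "\<Omega> \<noteq> {}" "finite B" "\<And>F. F \<in> \<Omega> \<Longrightarrow> F u \<in> B"
  shows "restr_entropy \<Omega> {u} \<le> ln (real (card B))"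
proof -
  have "restr_entropy \<Omega> {u} = uniform_entropy \<Omega> (\<lambda>F. F u)"
    by (rule uniform_entropy_cong_fibres) (auto simp: restrict_def fun_eq_iff)
  also have "\<dots> \<le> ln (real (card B))"
    using assms by (intro uniform_entropy_le_ln_card) auto
  finally show ?thesis .
qed

lemma uniform_entropy_add_expectation:
  assumes "finite \<Omega>" "\<And>w. w \<in> \<Omega> \<Longrightarrow> Z (f w) > 0"
  shows "uniform_entropy \<Omega> f + (\<Sum>w\<in>\<Omega>. ln (Z (f w))) / real (card \<Omega>)
    = (\<Sum>y\<in>f ` \<Omega>. real (card {w\<in>\<Omega>. f w = y}) / real (card \<Omega>)
         * ln (Z y / (real (card {w\<in>\<Omega>. f w = y}) / real (card \<Omega>))))"
proof -
  define N where "N = real (card \<Omega>)"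
  define c where "c y = real (card {w\<in>\<Omega>. f w = y})" for y
  have c_pos: "c (f w) > 0" if "w \<in> \<Omega>" for w
    using card_fibre_pos[OF assms(1) that] by (simp add: c_def)
  have "ln (N / c (f w)) + ln (Z (f w)) = ln (Z (f w) / (c (f w) / N))" if "w \<in> \<Omega>" for w
    using c_pos[OF that] assms(2)[OF that] that assms(1)
    by (auto simp: N_def ln_div ln_mult card_gt_0_iff)
  then have "uniform_entropy \<Omega> f + (\<Sum>w\<in>\<Omega>. ln (Z (f w))) / N
      = (\<Sum>w\<in>\<Omega>. ln (Z (f w) / (c (f w) / N))) / N"
    by (simp add: uniform_entropy_def N_def c_def add_divide_distrib[symmetric] sum.distrib[symmetric]
        cong: sum.cong)
  also have "\<dots> = (\<Sum>y\<in>f ` \<Omega>. c y / N * ln (Z y / (c y / N)))"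
    by (subst sum.image_gen[OF assms(1), where g = f])
      (simp add: sum_divide_distrib c_def)
  finally show ?thesis by (simp add: N_def c_def)
qed

lemma prod_powr_eq_exp_sum:
  fixes a :: "'a \<Rightarrow> real"
  assumes "finite A" "\<And>x. x \<in> A \<Longrightarrow> a x \<noteq> 0"
  shows "(\<Prod>x\<in>A. a x powr e x) = exp (\<Sum>x\<in>A. e x * ln (a x))"
  using assms by (simp add: exp_sum powr_def)

section \<open>Submodular set functions\<close>

lemma submodular_shearer:
  fixes h :: "'a set \<Rightarrow> real"
  assumes submod: "\<And>X Y. h (X \<union> Y) + h (X \<inter> Y) \<le> h X + h Y" and "h {} = 0"
    and "finite I" "finite E" and c_nonneg: "\<And>i. i \<in> I \<Longrightarrow> c i \<ge> 0"
    and cover: "\<And>u. u \<in> E \<Longrightarrow> (\<Sum>i\<in>{i\<in>I. u \<in> A i}. c i) = D"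
  shows "D * h E \<le> (\<Sum>i\<in>I. c i * h (A i \<inter> E))"
  using \<open>finite E\<close> cover
proof (induction E rule: finite_induct)
  case empty
  then show ?case by (simp add: \<open>h {} = 0\<close>)
next
  case (insert u E)
  define \<delta> where "\<delta> = h (insert u E) - h E"
  have step: "c i * h (A i \<inter> insert u E) - c i * h (A i \<inter> E) \<ge> (if u \<in> A i then c i * \<delta> else 0)"
    if "i \<in> I" for i
  proof (cases "u \<in> A i")
    case True
    have "(A i \<inter> insert u E) \<union> E = insert u E" and "(A i \<inter> insert u E) \<inter> E = A i \<inter> E"
      using True insert.hyps(2) by auto
    then have "h (insert u E) + h (A i \<inter> E) \<le> h (A i \<inter> insert u E) + h E"
      using submod[of "A i \<inter> insert u E" E] by simp
    then show ?thesis
      using True c_nonneg[OF that] mult_left_mono[of \<delta> "h (A i \<inter> insert u E) - h (A i \<inter> E)" "c i"]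
      by (simp add: \<delta>_def right_diff_distrib)
  qed simp
  have "D * h (insert u E) = D * h E + (\<Sum>i\<in>{i\<in>I. u \<in> A i}. c i) * \<delta>"
    using insert.prems by (simp add: \<delta>_def algebra_simps)
  also have "(\<Sum>i\<in>{i\<in>I. u \<in> A i}. c i) * \<delta> = (\<Sum>i\<in>I. if u \<in> A i then c i * \<delta> else 0)"
    using \<open>finite I\<close> by (simp add: sum_distrib_right sum.If_cases Int_def)
  also have "\<dots> \<le> (\<Sum>i\<in>I. c i * h (A i \<inter> insert u E) - c i * h (A i \<inter> E))"
    by (rule sum_mono) (rule step)
  also have "D * h E \<le> (\<Sum>i\<in>I. c i * h (A i \<inter> E))"
    using insert by simp
  finally show ?case by (simp add: sum_subtractf)
qed

lemma submodular_chain: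
  fixes h :: "'a set \<Rightarrow> real"
  assumes submod: "\<And>X Y. h (X \<union> Y) + h (X \<inter> Y) \<le> h X + h Y"
    and "finite V" "\<And>v. v \<in> V \<Longrightarrow> B v \<subseteq> E" "V \<inter> E = {}"
  shows "h (E \<union> V) \<le> h E + (\<Sum>v\<in>V. h (insert v (B v)) - h (B v))"
  using assms(2-)
proof (induction V rule: finite_induct)
  case (insert v V)
  have "insert v (B v) \<union> (E \<union> V) = E \<union> insert v V"
    and "insert v (B v) \<inter> (E \<union> V) = B v"
    using insert by auto
  then have "h (E \<union> insert v V) + h (B v) \<le> h (insert v (B v)) + h (E \<union> V)"
    using submod[of "insert v (B v)" "E \<union> V"] by simp
  with insert show ?case by simp
qed simp

section \<open>The lattice \<open>\<int>\<^sup>d\<close>\<close>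

lemma sum_abs_eq_1_int:
  fixes f :: "'a \<Rightarrow> int"
  assumes "finite A" "(\<Sum>i\<in>A. \<bar>f i\<bar>) = 1"
  obtains i where "i \<in> A" "\<bar>f i\<bar> = 1" "\<And>j. j \<in> A \<Longrightarrow> j \<noteq> i \<Longrightarrow> f j = 0"
proof -
  obtain i where i: "i \<in> A" "f i \<noteq> 0"
    using assms(2) by (metis (mono_tags, lifting) abs_zero sum.neutral zero_neq_one)
  have "(\<Sum>i\<in>A. \<bar>f i\<bar>) = \<bar>f i\<bar> + (\<Sum>j\<in>A - {i}. \<bar>f j\<bar>)"
    using assms(1) i(1) by (simp add: sum.remove)
  moreover have "(\<Sum>j\<in>A - {i}. \<bar>f j\<bar>) \<ge> 0" by (simp add: sum_nonneg)
  ultimately have "\<bar>f i\<bar> = 1" and rest: "(\<Sum>j\<in>A - {i}. \<bar>f j\<bar>) = 0"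
    using assms(2) i(2) by linarith+
  moreover have "f j = 0" if "j \<in> A" "j \<noteq> i" for j
    using rest assms(1) that by (simp add: sum_nonneg_eq_0_iff)
  ultimately show ?thesis using that i(1) by blast
qed

lemma adj_iff_axis: "adj u w \<longleftrightarrow> (\<exists>i s. s \<in> {1, -1} \<and> w = u + axis i s)"
proof
  assume "adj u w"
  then obtain i where i: "\<bar>w $ i - u $ i\<bar> = 1" and rest: "\<And>j. j \<noteq> i \<Longrightarrow> w $ j - u $ j = 0"
    unfolding adj_def using sum_abs_eq_1_int[of UNIV "\<lambda>j. w $ j - u $ j"]
    by (metis (no_types, lifting) abs_minus_commute finite_class.finite_UNIV iso_tuple_UNIV_I
        minus_diff_eq sum.cong)
  have "w = u + axis i (w $ i - u $ i)"
    using rest by (auto simp: vec_eq_iff axis_def)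
  moreover have "w $ i - u $ i \<in> {1, -1}" using i by (auto simp: abs_if split: if_splits)
  ultimately show "\<exists>i s. s \<in> {1, -1} \<and> w = u + axis i s" by blast
next
  assume "\<exists>i s. s \<in> {1, -1} \<and> w = u + axis i s"
  then obtain i s where "s \<in> {1, -1}" "w = u + axis i s" by blast
  then have "(\<Sum>j\<in>UNIV. \<bar>u $ j - w $ j\<bar>) = (\<Sum>j\<in>UNIV. if j = i then 1 else 0)"
    by (intro sum.cong) (auto simp: axis_def)
  then show "adj u w" by (simp add: adj_def)
qed

lemma nbrs_eq_image_axis: "nbrs u = (\<lambda>(i, s). u + axis i s) ` (UNIV \<times> {1, -1})"
  unfolding nbrs_def adj_iff_axis by auto

lemma finite_nbrs: "finite (nbrs u)"
  by (simp add: nbrs_eq_image_axis)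

lemma card_nbrs: "card (nbrs (u :: int ^ 'n)) = 2 * CARD('n)"
proof -
  have "inj_on (\<lambda>(i, s). u + axis i s) (UNIV \<times> {1 :: int, -1})"
    by (auto intro!: inj_onI simp: axis_eq_axis)
  then show ?thesis
    by (simp add: nbrs_eq_image_axis card_image card_cartesian_product)
qed

lemma adj_sym: "adj u w \<longleftrightarrow> adj w u"
  unfolding adj_def by (simp add: abs_minus_commute)

lemma adj_parity: "adj u w \<Longrightarrow> odd_vtx w \<longleftrightarrow> even_vtx u"
proof (unfold adj_iff_axis, elim exE conjE)
  fix i and s :: int
  assume "s \<in> {1, -1}" "w = u + axis i s"
  moreover have "(\<Sum>j\<in>UNIV. (u + axis i s) $ j) = (\<Sum>j\<in>UNIV. u $ j) + s"
    by (simp add: sum.distrib axis_def)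
  ultimately show "odd_vtx w \<longleftrightarrow> even_vtx u"
    by (auto simp: odd_vtx_def even_vtx_def)
qed

lemma nbrs_odd_subset_even:
  assumes "even_set S" "v \<in> S" "odd_vtx v"
  shows "nbrs v \<subseteq> {u\<in>S. even_vtx u}"
proof
  fix w assume "w \<in> nbrs v"
  then have vw: "adj v w" by (simp add: nbrs_def)
  have "v \<notin> inner_bd S"
    using assms by (auto simp: even_set_def even_vtx_def odd_vtx_def)
  then have "w \<in> S" using assms(2) vw by (auto simp: inner_bd_def)
  moreover have "even_vtx w"
    using adj_parity[of w v] assms(3) vw adj_sym by blast
  ultimately show "w \<in> {u\<in>S. even_vtx u}" by simp
qed

lemma inc_edges_Int_edge_bd:
  assumes "u \<in> S"
  shows "inc_edges u \<inter> edge_bd S = (\<lambda>w. {u, w}) ` {w. adj u w \<and> w \<notin> S}"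
  using assms adj_sym by (auto simp: inc_edges_def edge_bd_def doubleton_eq_iff)

lemma inc_edges_Int_edge_bd_empty:
  assumes "u \<in> S" "u \<notin> inner_bd S"
  shows "inc_edges u \<inter> edge_bd S = {}"
  using assms by (auto simp: inc_edges_Int_edge_bd inner_bd_def)

lemma inner_bd_subset_even: "even_set S \<Longrightarrow> inner_bd S \<subseteq> {u\<in>S. even_vtx u}"
  by (auto simp: even_set_def inner_bd_def)

lemma card_odd_nbrs_add_card_edge_bd:
  fixes S :: "(int ^ 'n) set"
  assumes "u \<in> S" "even_vtx u"
  shows "card {v\<in>S. odd_vtx v \<and> u \<in> nbrs v} + card (inc_edges u \<inter> edge_bd S) = 2 * CARD('n)"
proof -
  have "{v\<in>S. odd_vtx v \<and> u \<in> nbrs v} = {w\<in>S. adj u w}"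
    using assms(2) adj_parity[of u] by (auto simp: nbrs_def adj_sym)
  moreover have "card (inc_edges u \<inter> edge_bd S) = card {w. adj u w \<and> w \<notin> S}"
    unfolding inc_edges_Int_edge_bd[OF assms(1)]
    by (rule card_image) (auto intro!: inj_onI simp: doubleton_eq_iff)
  moreover have "card {w\<in>S. adj u w} + card {w. adj u w \<and> w \<notin> S} = card (nbrs u)"
    unfolding nbrs_def using finite_nbrs[of u, unfolded nbrs_def]
    by (subst card_Un_disjoint[symmetric]) (auto intro: arg_cong[where f = card])
  ultimately show ?thesis by (simp add: card_nbrs)
qed

section \<open>Homomorphisms on an even set\<close>

lemma restr_entropy_le_even_part:
  fixes FF :: "(int ^ 'n \<Rightarrow> 'h) set" and S :: "(int ^ 'n) set"
  assumes "finite FF" "finite S" "even_set S"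
  shows "restr_entropy FF S \<le> restr_entropy FF {u\<in>S. even_vtx u}
    + (\<Sum>v\<in>{v\<in>S. odd_vtx v}. restr_entropy FF (insert v (nbrs v)) - restr_entropy FF (nbrs v))"
proof -
  have S_split: "{u\<in>S. even_vtx u} \<union> {v\<in>S. odd_vtx v} = S"
    by (auto simp: odd_vtx_def even_vtx_def)
  have "restr_entropy FF ({u\<in>S. even_vtx u} \<union> {v\<in>S. odd_vtx v}) \<le> restr_entropy FF {u\<in>S. even_vtx u}
    + (\<Sum>v\<in>{v\<in>S. odd_vtx v}. restr_entropy FF (insert v (nbrs v)) - restr_entropy FF (nbrs v))"
    using nbrs_odd_subset_even[OF assms(3)] assms(2)
    by (intro submodular_chain[OF restr_entropy_submodular[OF assms(1)]])
      (auto simp: odd_vtx_def even_vtx_def)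
  then show ?thesis unfolding S_split .
qed

lemma restr_entropy_even_part_le:
  fixes FF :: "(int ^ 'n \<Rightarrow> 'h) set" and S :: "(int ^ 'n) set"
  assumes "finite FF" "finite S" "even_set S"
  shows "2 * real CARD('n) * restr_entropy FF {u\<in>S. even_vtx u}
    \<le> (\<Sum>v\<in>{v\<in>S. odd_vtx v}. restr_entropy FF (nbrs v))
      + (\<Sum>u\<in>inner_bd S. real (card (inc_edges u \<inter> edge_bd S)) * restr_entropy FF {u})"
proof -
  define Ev where "Ev = {u\<in>S. even_vtx u}"
  define Od where "Od = {v\<in>S. odd_vtx v}"
  define b where "b u = real (card (inc_edges u \<inter> edge_bd S))" for u
  define A :: "int ^ 'n + int ^ 'n \<Rightarrow> (int ^ 'n) set" where "A = case_sum nbrs (\<lambda>u. {u})"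
  define c :: "int ^ 'n + int ^ 'n \<Rightarrow> real" where "c = case_sum (\<lambda>_. 1) b"
  have fin: "finite Od" "finite (inner_bd S)" "finite Ev"
    using assms(2) by (auto simp: Od_def Ev_def inner_bd_def)
  have "2 * real CARD('n) * restr_entropy FF Ev
      \<le> (\<Sum>i\<in>Od <+> inner_bd S. c i * restr_entropy FF (A i \<inter> Ev))"
  proof (rule submodular_shearer[OF restr_entropy_submodular[OF assms(1)]])
    fix u assume u: "u \<in> Ev"
    have "{i\<in>Od <+> inner_bd S. u \<in> A i} = {v\<in>Od. u \<in> nbrs v} <+> (inner_bd S \<inter> {u})"
      by (auto simp: A_def)
    then have "(\<Sum>i\<in>{i\<in>Od <+> inner_bd S. u \<in> A i}. c i)
        = real (card {v\<in>Od. u \<in> nbrs v}) + (\<Sum>u'\<in>inner_bd S \<inter> {u}. b u')"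
      using fin by (simp add: sum.Plus c_def comp_def)
    also have "(\<Sum>u'\<in>inner_bd S \<inter> {u}. b u') = b u"
      using inc_edges_Int_edge_bd_empty[of u S] u by (cases "u \<in> inner_bd S") (auto simp: Ev_def b_def)
    also have "real (card {v\<in>Od. u \<in> nbrs v}) + b u = 2 * real CARD('n)"
      using arg_cong[OF card_odd_nbrs_add_card_edge_bd[of u S], of real] u
      by (simp add: Od_def b_def Ev_def)
    finally show "(\<Sum>i\<in>{i\<in>Od <+> inner_bd S. u \<in> A i}. c i) = 2 * real CARD('n)" .
  qed (use fin in \<open>auto simp: restrict_def uniform_entropy_const c_def b_def split: sum.splits\<close>)
  also have "\<dots> = (\<Sum>v\<in>Od. restr_entropy FF (nbrs v)) + (\<Sum>u\<in>inner_bd S. b u * restr_entropy FF {u})"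
    using fin nbrs_odd_subset_even[OF assms(3)] inner_bd_subset_even[OF assms(3)]
    by (auto simp: sum.Plus A_def c_def Od_def Ev_def Int_absorb2 intro!: sum.cong)
  finally show ?thesis by (simp add: Ev_def Od_def b_def)
qed

definition admissible :: "'h set \<Rightarrow> ((int ^ 'n) set \<Rightarrow> ('h \<times> 'h) set) \<Rightarrow> (int ^ 'n \<Rightarrow> 'h) set
    \<Rightarrow> (int ^ 'n \<Rightarrow> (int ^ 'n \<Rightarrow> 'h) \<Rightarrow> 'x) \<Rightarrow> int ^ 'n \<Rightarrow> (int ^ 'n \<Rightarrow> 'h) \<Rightarrow> 'h set" where
  "admissible Hs H FF X v \<psi> = H_vtx Hs H v \<psi> \<inter> IX FF X v (X v \<psi>)"

lemma finite_Hom: "finite Hs \<Longrightarrow> finite S \<Longrightarrow> finite (Hom Hs H S)"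
  by (rule finite_subset[OF _ finite_PiE[of S "\<lambda>_. Hs"]]) (auto simp: Hom_def)

lemma restrict_Hom: "F \<in> Hom Hs H S \<Longrightarrow> restrict F S = F"
  by (simp add: Hom_def PiE_def extensional_restrict)

lemma Hom_value_mem_admissible:
  assumes "FF \<subseteq> Hom Hs H S" "F \<in> FF" "v \<in> S" "odd_vtx v"
  shows "F v \<in> admissible Hs H FF X v (restrict F (nbrs v))"
  using assms by (auto simp: admissible_def IX_def Hom_def H_vtx_def H_edge_def nbrs_def PiE_iff)

lemma finite_admissible:
  assumes "finite Hs" "FF \<subseteq> Hom Hs H S" "v \<in> S"
  shows "finite (admissible Hs H FF X v \<psi>)"
proof -
  have "IX FF X v (X v \<psi>) \<subseteq> Hs" using assms(2,3) by (auto simp: IX_def Hom_def PiE_iff)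
  then show ?thesis using assms(1) by (auto simp: admissible_def intro: finite_subset)
qed

lemma card_admissible_pos:
  assumes "finite Hs" "FF \<subseteq> Hom Hs H S" "F \<in> FF" "v \<in> S" "odd_vtx v"
  shows "card (admissible Hs H FF X v (restrict F (nbrs v))) > 0"
  using Hom_value_mem_admissible[OF assms(2-5)] finite_admissible[OF assms(1,2,4)]
  by (auto simp: card_gt_0_iff)

lemma Zv_eq_sum_admissible:
  fixes v :: "int ^ 'n"
  shows "real (Zv Hs H v (PsiX FF X v x) (IX FF X v x))
    = (\<Sum>\<psi>\<in>PsiX FF X v x. real (card (admissible Hs H FF X v \<psi>)) ^ (2 * CARD('n)))"
  by (auto simp: Zv_def admissible_def PsiX_def intro!: sum.cong)

lemma Zv_pos:
  assumes "finite FF" "finite Hs" "FF \<subseteq> Hom Hs H S" "F \<in> FF" "v \<in> S" "odd_vtx v"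
  shows "Zv Hs H v (PsiX FF X v (X v (restrict F (nbrs v)))) (IX FF X v (X v (restrict F (nbrs v)))) > 0"
proof -
  have "restrict F (nbrs v) \<in> PsiX FF X v (X v (restrict F (nbrs v)))"
    using assms(4) by (auto simp: PsiX_def)
  moreover have "finite (PsiX FF X v (X v (restrict F (nbrs v))))"
    using assms(1) by (auto simp: PsiX_def)
  ultimately have "real (Zv Hs H v (PsiX FF X v (X v (restrict F (nbrs v))))
      (IX FF X v (X v (restrict F (nbrs v))))) > 0"
    unfolding Zv_eq_sum_admissible using card_admissible_pos[OF assms(2-6), of X]
    by (intro sum_pos2) auto
  then show ?thesis by simp
qed

lemma probX_support:
  assumes "finite FF"
  shows "{x. probX FF X v x > 0} = (\<lambda>F. X v (restrict F (nbrs v))) ` FF"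
  using assms by (auto simp: probX_def card_gt_0_iff zero_less_divide_iff)

lemma restr_entropy_insert_nbrs_le:
  assumes "finite FF" "finite Hs" "FF \<subseteq> Hom Hs H S" "v \<in> S" "odd_vtx v"
  shows "restr_entropy FF (insert v (nbrs v)) \<le> restr_entropy FF (nbrs v)
    + (\<Sum>F\<in>FF. ln (real (card (admissible Hs H FF X v (restrict F (nbrs v)))))) / real (card FF)"
proof -
  have "restr_entropy FF (insert v (nbrs v)) = uniform_entropy FF (\<lambda>F. (restrict F (nbrs v), F v))"
    by (rule uniform_entropy_cong_fibres) (auto simp: restrict_def fun_eq_iff)
  also have "\<dots> \<le> restr_entropy FF (nbrs v)
      + (\<Sum>F\<in>FF. ln (real (card (admissible Hs H FF X v (restrict F (nbrs v)))))) / real (card FF)"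
    using finite_admissible[OF assms(2-4)] Hom_value_mem_admissible[OF assms(3) _ assms(4,5)]
    by (intro uniform_entropy_pair_le[OF assms(1)]) blast
  finally show ?thesis .
qed

text \<open>Gibbs' inequality with the kernel k(\<psi>)^{2d} / Z(X_v(\<psi>)).\<close>
lemma restr_entropy_nbrs_le:
  fixes FF :: "(int ^ 'n \<Rightarrow> 'h) set" and X :: "int ^ 'n \<Rightarrow> (int ^ 'n \<Rightarrow> 'h) \<Rightarrow> 'x"
  assumes fin: "finite FF" and "finite Hs" "FF \<subseteq> Hom Hs H S" "v \<in> S" "odd_vtx v"
  defines "k \<equiv> \<lambda>\<psi>. real (card (admissible Hs H FF X v \<psi>))"
    and "Z \<equiv> \<lambda>x. real (Zv Hs H v (PsiX FF X v x) (IX FF X v x))"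
  shows "restr_entropy FF (nbrs v) + 2 * real CARD('n) * (\<Sum>F\<in>FF. ln (k (restrict F (nbrs v)))) / real (card FF)
    \<le> uniform_entropy FF (\<lambda>F. X v (restrict F (nbrs v)))
      + (\<Sum>F\<in>FF. ln (Z (X v (restrict F (nbrs v))))) / real (card FF)"
proof -
  have k_pos: "k (restrict F (nbrs v)) > 0" and Z_pos: "Z (X v (restrict F (nbrs v))) > 0"
    if "F \<in> FF" for F
    using card_admissible_pos[OF assms(2,3) that assms(4,5)] Zv_pos[OF fin assms(2,3) that assms(4,5)]
    by (simp_all add: k_def Z_def)
  have "restr_entropy FF (nbrs v) \<le> uniform_entropy FF (\<lambda>F. X v (restrict F (nbrs v)))
      - (\<Sum>F\<in>FF. ln (k (restrict F (nbrs v)) ^ (2 * CARD('n)) / Z (X v (restrict F (nbrs v)))))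
        / real (card FF)"
  proof (rule uniform_entropy_conditional_le[OF fin])
    show "k (restrict F (nbrs v)) ^ (2 * CARD('n)) / Z (X v (restrict F (nbrs v))) > 0"
      if "F \<in> FF" for F
      using k_pos[OF that] Z_pos[OF that] by simp
    fix y
    have "{\<psi>\<in>(\<lambda>F. restrict F (nbrs v)) ` FF. X v \<psi> = y} = PsiX FF X v y"
      by (auto simp: PsiX_def)
    moreover have "(\<Sum>\<psi>\<in>PsiX FF X v y. k \<psi> ^ (2 * CARD('n)) / Z (X v \<psi>))
        = (\<Sum>\<psi>\<in>PsiX FF X v y. k \<psi> ^ (2 * CARD('n))) / Z y"
      by (auto simp: PsiX_def sum_divide_distrib intro!: sum.cong)
    ultimately show "(\<Sum>\<psi>\<in>{\<psi>\<in>(\<lambda>F. restrict F (nbrs v)) ` FF. X v \<psi> = y}.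
        k \<psi> ^ (2 * CARD('n)) / Z (X v \<psi>)) \<le> 1"
      by (simp add: k_def Z_def Zv_eq_sum_admissible[symmetric])
  qed
  moreover have "ln (k (restrict F (nbrs v)) ^ (2 * CARD('n)) / Z (X v (restrict F (nbrs v))))
      = 2 * real CARD('n) * ln (k (restrict F (nbrs v))) - ln (Z (X v (restrict F (nbrs v))))"
    if "F \<in> FF" for F
    using k_pos[OF that] Z_pos[OF that] by (simp add: ln_div ln_realpow)
  ultimately show ?thesis
    by (simp add: sum_subtractf sum_distrib_left diff_divide_distrib cong: sum.cong)
qed

lemma local_entropy_bound:
  fixes FF :: "(int ^ 'n \<Rightarrow> 'h) set" and X :: "int ^ 'n \<Rightarrow> (int ^ 'n \<Rightarrow> 'h) \<Rightarrow> 'x"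
  assumes fin: "finite FF" and "finite Hs" "FF \<subseteq> Hom Hs H S" "v \<in> S" "odd_vtx v"
  shows "restr_entropy FF (nbrs v)
      + 2 * real CARD('n) * (restr_entropy FF (insert v (nbrs v)) - restr_entropy FF (nbrs v))
    \<le> (\<Sum>x\<in>{x. probX FF X v x > 0}.
          probX FF X v x * ln (real (Zv Hs H v (PsiX FF X v x) (IX FF X v x)) / probX FF X v x))"
proof -
  define L where "L = (\<Sum>F\<in>FF. ln (real (card (admissible Hs H FF X v (restrict F (nbrs v)))))) / real (card FF)"
  have "restr_entropy FF (insert v (nbrs v)) - restr_entropy FF (nbrs v) \<le> L"
    using restr_entropy_insert_nbrs_le[OF assms, of X] by (simp add: L_def)
  then have "2 * real CARD('n) * (restr_entropy FF (insert v (nbrs v)) - restr_entropy FF (nbrs v))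
      \<le> 2 * real CARD('n) * L"
    by (rule mult_left_mono) simp
  moreover have "restr_entropy FF (nbrs v) + 2 * real CARD('n) * L
      \<le> uniform_entropy FF (\<lambda>F. X v (restrict F (nbrs v)))
        + (\<Sum>F\<in>FF. ln (real (Zv Hs H v (PsiX FF X v (X v (restrict F (nbrs v))))
            (IX FF X v (X v (restrict F (nbrs v))))))) / real (card FF)"
    using restr_entropy_nbrs_le[OF assms, of X] by (simp add: L_def)
  moreover have "\<dots> = (\<Sum>x\<in>{x. probX FF X v x > 0}.
      probX FF X v x * ln (real (Zv Hs H v (PsiX FF X v x) (IX FF X v x)) / probX FF X v x))"
    unfolding probX_support[OF fin] using Zv_pos[OF fin assms(2,3) _ assms(4,5)]
    by (subst uniform_entropy_add_expectation[OF fin]) (auto simp: probX_def image_image)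
  ultimately show ?thesis by linarith
qed

lemma ln_card_le:
  fixes S :: "(int ^ 'n) set" and FF :: "(int ^ 'n \<Rightarrow> 'h) set"
  assumes fin_Hs: "finite Hs" and "finite S" "even_set S" and Hu: "\<forall>u \<in> inner_bd S. Hu u \<subseteq> Hs"
    and hom: "FF \<subseteq> Hom Hs H S" and "FF \<noteq> {}" and FF_Hu: "\<forall>F \<in> FF. \<forall>u \<in> inner_bd S. F u \<in> Hu u"
  shows "2 * real CARD('n) * ln (real (card FF))
    \<le> (\<Sum>v\<in>{v\<in>S. odd_vtx v}. \<Sum>x\<in>{x. probX FF X v x > 0}.
          probX FF X v x * ln (real (Zv Hs H v (PsiX FF X v x) (IX FF X v x)) / probX FF X v x))
      + (\<Sum>u\<in>inner_bd S. real (card (inc_edges u \<inter> edge_bd S)) * ln (real (card (Hu u))))"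
proof -
  define D where "D = 2 * real CARD('n)"
  have fin: "finite FF"
    using finite_subset[OF hom finite_Hom[OF fin_Hs \<open>finite S\<close>]] .
  have ln_card: "ln (real (card FF)) = restr_entropy FF S"
    using hom by (intro uniform_entropy_inj[symmetric] inj_onI) (metis restrict_Hom subsetD)
  have chain: "D * restr_entropy FF S \<le> D * restr_entropy FF {u\<in>S. even_vtx u}
      + (\<Sum>v\<in>{v\<in>S. odd_vtx v}. D * (restr_entropy FF (insert v (nbrs v)) - restr_entropy FF (nbrs v)))"
    using mult_left_mono[OF restr_entropy_le_even_part[OF fin \<open>finite S\<close> \<open>even_set S\<close>], of D]
    by (simp add: D_def distrib_left sum_distrib_left)
  have local: "(\<Sum>v\<in>{v\<in>S. odd_vtx v}. restr_entropy FF (nbrs v))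
      + (\<Sum>v\<in>{v\<in>S. odd_vtx v}. D * (restr_entropy FF (insert v (nbrs v)) - restr_entropy FF (nbrs v)))
      \<le> (\<Sum>v\<in>{v\<in>S. odd_vtx v}. \<Sum>x\<in>{x. probX FF X v x > 0}.
          probX FF X v x * ln (real (Zv Hs H v (PsiX FF X v x) (IX FF X v x)) / probX FF X v x))"
    unfolding sum.distrib[symmetric] D_def
    by (intro sum_mono local_entropy_bound[OF fin fin_Hs hom]) auto
  have boundary: "(\<Sum>u\<in>inner_bd S. real (card (inc_edges u \<inter> edge_bd S)) * restr_entropy FF {u})
      \<le> (\<Sum>u\<in>inner_bd S. real (card (inc_edges u \<inter> edge_bd S)) * ln (real (card (Hu u))))"
    using Hu FF_Hu fin_Hs
    by (intro sum_mono mult_left_mono restr_entropy_singleton_le[OF fin \<open>FF \<noteq> {}\<close>])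
      (auto intro: finite_subset)
  show ?thesis
    unfolding ln_card D_def[symmetric]
    using chain local boundary restr_entropy_even_part_le[OF fin \<open>finite S\<close> \<open>even_set S\<close>, folded D_def]
    by linarith
qed

lemma prod_odd_powr_eq_exp:
  assumes fin: "finite FF" and "finite Hs" "FF \<subseteq> Hom Hs H S" "finite S"
  shows "(\<Prod>v \<in> {v \<in> S. odd_vtx v}. \<Prod>x \<in> {x. probX FF X v x > 0}.
        (real (Zv Hs H v (PsiX FF X v x) (IX FF X v x)) / probX FF X v x) powr (probX FF X v x / c))
    = exp ((\<Sum>v\<in>{v\<in>S. odd_vtx v}. \<Sum>x\<in>{x. probX FF X v x > 0}.
        probX FF X v x * ln (real (Zv Hs H v (PsiX FF X v x) (IX FF X v x)) / probX FF X v x)) / c)"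
proof -
  have "(\<Prod>x \<in> {x. probX FF X v x > 0}.
        (real (Zv Hs H v (PsiX FF X v x) (IX FF X v x)) / probX FF X v x) powr (probX FF X v x / c))
      = exp (\<Sum>x\<in>{x. probX FF X v x > 0}.
        probX FF X v x / c * ln (real (Zv Hs H v (PsiX FF X v x) (IX FF X v x)) / probX FF X v x))"
    if "v \<in> {v \<in> S. odd_vtx v}" for v
  proof (rule prod_powr_eq_exp_sum)
    show "finite {x. probX FF X v x > 0}" using fin by (simp add: probX_support)
    fix x assume x: "x \<in> {x. probX FF X v x > 0}"
    then obtain F where "F \<in> FF" "x = X v (restrict F (nbrs v))"
      unfolding probX_support[OF fin] by blast
    with x show "real (Zv Hs H v (PsiX FF X v x) (IX FF X v x)) / probX FF X v x \<noteq> 0"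
      using Zv_pos[OF assms(1-3) \<open>F \<in> FF\<close>, of v X] that by simp
  qed
  then show ?thesis
    using \<open>finite S\<close> by (subst prod.cong[OF refl]) (simp_all add: exp_sum sum_divide_distrib)
qed

theorem lemma7p4:
  fixes Hs :: "'h set"
    and H :: "(int ^ 'n) set \<Rightarrow> ('h \<times> 'h) set"
    and S :: "(int ^ 'n) set"
    and Hu :: "int ^ 'n \<Rightarrow> 'h set"
    and FF :: "(int ^ 'n \<Rightarrow> 'h) set"
    and X :: "int ^ 'n \<Rightarrow> (int ^ 'n \<Rightarrow> 'h) \<Rightarrow> 'x"
  assumes "finite Hs"
    and "finite S"
    and "even_set S"
    and "\<forall>u \<in> inner_bd S. Hu u \<subseteq> Hs"
    and "FF \<subseteq> Hom Hs H S"
    and "FF \<noteq> {}"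
    and "\<forall>F \<in> FF. \<forall>u \<in> inner_bd S. F u \<in> Hu u"
  shows "real (card FF) \<le>
    (\<Prod>v \<in> {v \<in> S. odd_vtx v}. \<Prod>x \<in> {x. probX FF X v x > 0}.
        (real (Zv Hs H v (PsiX FF X v x) (IX FF X v x)) / probX FF X v x)
          powr (probX FF X v x / (2 * real CARD('n))))
    * (\<Prod>u \<in> inner_bd S. real (card (Hu u))
          powr (real (card (inc_edges u \<inter> edge_bd S)) / (2 * real CARD('n))))"
proof -
  define A where "A = (\<Sum>v\<in>{v\<in>S. odd_vtx v}. \<Sum>x\<in>{x. probX FF X v x > 0}.
    probX FF X v x * ln (real (Zv Hs H v (PsiX FF X v x) (IX FF X v x)) / probX FF X v x))"
  define B where "B = (\<Sum>u\<in>inner_bd S. real (card (inc_edges u \<inter> edge_bd S)) * ln (real (card (Hu u))))"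
  have fin: "finite FF"
    using finite_subset[OF assms(5) finite_Hom[OF assms(1,2)]] .
  have odd_part: "exp (A / (2 * real CARD('n))) = (\<Prod>v \<in> {v \<in> S. odd_vtx v}. \<Prod>x \<in> {x. probX FF X v x > 0}.
      (real (Zv Hs H v (PsiX FF X v x) (IX FF X v x)) / probX FF X v x)
        powr (probX FF X v x / (2 * real CARD('n))))"
    unfolding A_def by (rule prod_odd_powr_eq_exp[OF fin assms(1,5,2), symmetric])
  have boundary_part: "exp (B / (2 * real CARD('n))) = (\<Prod>u \<in> inner_bd S. real (card (Hu u))
      powr (real (card (inc_edges u \<inter> edge_bd S)) / (2 * real CARD('n))))"
    using assms(1,2,4,6,7) finite_subset
    by (subst prod_powr_eq_exp_sum) (fastforce simp: B_def inner_bd_def card_gt_0_iff sum_divide_distrib)+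
  have "real (card FF) = exp (ln (real (card FF)))"
    using fin assms(6) by (simp add: card_gt_0_iff)
  also have "\<dots> \<le> exp (A / (2 * real CARD('n)) + B / (2 * real CARD('n)))"
    using ln_card_le[OF assms, of X] by (simp add: A_def B_def field_simps)
  finally show ?thesis
    by (simp only: exp_add odd_part boundary_part)
qed

end
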